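(* For integers $k\ge1$ and $1\le j\le 2k-1$ put \[ a_{jk}=\sum_{i=\max(k-j,0)}^{k-1}\Big(-\frac12\Big)^i(j)_{k-i}\frac{(k-1+i)!}{(k-1-i)!\,i!}, \] with $(n)_r=n(n-1)\cdots(n-r+1)$, $(n)_0=1$. Then $a_{2k-1,k}=\dfrac{(2k-1)!}{2^{k-1}(k-1)!}\neq0$, and $a_{jk}=0$ for every even $j$ with $2\le j\le 2k-2$. *)

theory Defs
  imports Complex_Main
begin

definition falling :: "int \<Rightarrow> nat \<Rightarrow> real" where
  "falling n r = (\<Prod>l<r. real_of_int (n - int l))"

definition a_coef :: "nat \<Rightarrow> nat \<Rightarrow> real" where
  "a_coef j k = (\<Sum>i = nat (max (int k - int j) 0) .. k - 1.
      (- 1 / 2) ^ i * falling (int j) (k - i)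
      * fact (k - 1 + i) / (fact (k - 1 - i) * fact i))"

end

theory Submission
  imports Defs
begin

(* The coefficient a_{jk} is, up to the signs (-1/2)^i, a convolution of the
   falling factorials (j)_{k-i} with the coefficients
       beta(n,i) = (n+i)! / ((n-i)! i!),   n = k - 1,
   of the Bessel polynomial y_n.  The whole theorem follows from the closed form
       a_{j,n+1} = j (j-2) (j-4) ... (j-2n),
   which is proved by induction on n: the Pascal-type recurrence
       beta(n+1,i) = beta(n,i) + 2(n+i) beta(n,i-1)
   together with (j)_{r+1} = (j)_r (j-r) shows that passing from n to n+1
   multiplies the sum by (j - 2(n+1)).  For j = 2k-1 the product is the product
   of the odd numbers 1, 3, ..., 2k-1, i.e. (2k-1)!/(2^{k-1}(k-1)!) > 0; for an
   even j = 2t with 1 <= t <= k-1 the product contains the factor j - 2t = 0. *)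

lemma falling_Suc: "falling n (Suc r) = falling n r * (real_of_int n - real r)"
  by (simp add: falling_def)

text \<open>(j)_r vanishes once r exceeds the natural number j, since it contains the factor j - j.\<close>
lemma falling_eq_0:
  assumes "j < r"
  shows "falling (int j) r = 0"
  unfolding falling_def using assms by (intro prod_zero) (auto intro!: bexI[where x = j])

lemma fact_plus_1: "(fact (m + 1) :: real) = (real m + 1) * fact m"
  by simp

lemma fact_plus_2: "(fact (m + 2) :: real) = (real m + 2) * (real m + 1) * fact m"
  by (simp add: eval_nat_numeral algebra_simps)

text \<open>beta(n,i) = (n+i)!/((n-i)! i!), the i-th coefficient of the Bessel polynomial y_n, and 0 for i > n.\<close>
definition bessel_coeff :: "nat \<Rightarrow> nat \<Rightarrow> real" where
  "bessel_coeff n i = (if i \<le> n then fact (n + i) / (fact (n - i) * fact i) else 0)"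

lemma bessel_coeff_Suc_Suc:
  "bessel_coeff (Suc n) (Suc i) = bessel_coeff n (Suc i) + 2 * (real n + real i + 1) * bessel_coeff n i"
proof (cases "i < n")
  case True
  then obtain r where n: "n = Suc (i + r)" using less_imp_Suc_add by blast
  define m where "m = 2 * i + r + 1"
  have coeffs: "bessel_coeff (Suc n) (Suc i) = fact (m + 2) / (fact (r + 1) * fact (i + 1))"
      "bessel_coeff n (Suc i) = fact (m + 1) / (fact r * fact (i + 1))"
      "bessel_coeff n i = fact m / (fact (r + 1) * fact i)"
      "real n + real i + 1 = real m + 1"
    unfolding bessel_coeff_def n m_def by (auto simp del: fact_Suc intro!: arg_cong[where f = fact])
  have m: "real m = 2 * real i + real r + 1" by (simp add: m_def)
  \<comment> \<open>the denominators (r+1) r! and (i+1) i! in the normal form produced by the simplifier\<close>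
  have "(fact r :: real) + fact r * real r > 0" "(fact i :: real) + fact i * real i > 0"
    by (simp_all add: add_pos_nonneg)
  then show ?thesis
    unfolding coeffs fact_plus_1 fact_plus_2 by (simp add: divide_simps) (simp add: m algebra_simps)
next
  case False
  show ?thesis
  proof (cases "i = n")
    case True
    have coeffs: "bessel_coeff (Suc n) (Suc n) = fact (2 * n + 2) / fact (n + 1)"
        "bessel_coeff n (Suc n) = 0" "bessel_coeff n n = fact (2 * n) / fact n"
      unfolding bessel_coeff_def by (auto simp del: fact_Suc intro!: arg_cong[where f = fact])
    have "(fact n :: real) + fact n * real n > 0" by (simp add: add_pos_nonneg)
    then show ?thesis
      unfolding True coeffs fact_plus_1 fact_plus_2 by (simp add: divide_simps) (simp add: algebra_simps)
  next
    case False
    with \<open>\<not> i < n\<close> show ?thesis by (simp add: bessel_coeff_def)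
  qed
qed

lemma bessel_coeff_Suc:
  "bessel_coeff (Suc n) i =
     bessel_coeff n i + (if i = 0 then 0 else 2 * (real n + real i) * bessel_coeff n (i - 1))"
proof (cases i)
  case 0
  then show ?thesis by (simp add: bessel_coeff_def)
next
  case (Suc p)
  then show ?thesis by (simp add: bessel_coeff_Suc_Suc algebra_simps)
qed

text \<open>S(n,j) = sum_{i<=n} (-1/2)^i beta(n,i) (j)_{n+1-i}; this is a_{j,n+1} without the
  truncation of the summation range.\<close>
definition bessel_sum :: "nat \<Rightarrow> int \<Rightarrow> real" where
  "bessel_sum n j = (\<Sum>i\<le>n. (- 1 / 2) ^ i * bessel_coeff n i * falling j (Suc n - i))"

text \<open>The first part of the
  recurrence for beta contributes the factor j - (n+1-i), the shifted second part the factor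
  -(n+1+i); their sum does not depend on i.\<close>
lemma bessel_sum_Suc:
  "bessel_sum (Suc n) j = (real_of_int j - 2 * (real n + 1)) * bessel_sum n j"
proof -
  let ?c = "\<lambda>i. (- 1 / 2 :: real) ^ i"
  let ?d = "\<lambda>i. if i = 0 then 0 else 2 * (real n + real i) * bessel_coeff n (i - 1)"
  let ?t = "\<lambda>i. ?c i * bessel_coeff n i * falling j (Suc n - i)"
  \<comment> \<open>the term i = n+1 vanishes since beta(n,n+1) = 0; split off the last factor of (j)_{n+2-i}\<close>
  have first: "(\<Sum>i\<le>Suc n. ?c i * bessel_coeff n i * falling j (Suc (Suc n) - i))
      = (\<Sum>i\<le>n. (real_of_int j - (real n + 1 - real i)) * ?t i)"
  proof -
    have "(\<Sum>i\<le>Suc n. ?c i * bessel_coeff n i * falling j (Suc (Suc n) - i))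
        = (\<Sum>i\<le>n. ?c i * bessel_coeff n i * falling j (Suc (Suc n - i)))"
      by (simp add: bessel_coeff_def Suc_diff_le)
    also have "\<dots> = (\<Sum>i\<le>n. (real_of_int j - (real n + 1 - real i)) * ?t i)"
      by (intro sum.cong refl) (simp add: falling_Suc of_nat_diff)
    finally show ?thesis .
  qed
  \<comment> \<open>shift the index i to i+1; (-1/2)^{i+1} * 2 = -(-1/2)^i\<close>
  have second: "(\<Sum>i\<le>Suc n. ?c i * ?d i * falling j (Suc (Suc n) - i))
      = (\<Sum>i\<le>n. - (real n + 1 + real i) * ?t i)"
    by (subst sum.atMost_Suc_shift) (simp add: algebra_simps)
  have "bessel_sum (Suc n) j
      = (\<Sum>i\<le>Suc n. ?c i * bessel_coeff n i * falling j (Suc (Suc n) - i))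
      + (\<Sum>i\<le>Suc n. ?c i * ?d i * falling j (Suc (Suc n) - i))"
    unfolding bessel_sum_def bessel_coeff_Suc by (simp add: algebra_simps sum.distrib)
  also have "\<dots> = (\<Sum>i\<le>n. (real_of_int j - 2 * (real n + 1)) * ?t i)"
    unfolding first second sum.distrib[symmetric] by (intro sum.cong refl) (simp add: algebra_simps)
  also have "\<dots> = (real_of_int j - 2 * (real n + 1)) * bessel_sum n j"
    by (simp add: bessel_sum_def sum_distrib_left)
  finally show ?thesis .
qed

lemma bessel_sum_closed: "bessel_sum n j = (\<Prod>l\<le>n. real_of_int j - 2 * real l)"
proof (induction n)
  case 0
  show ?case by (simp add: bessel_sum_def bessel_coeff_def falling_def)
next
  case (Suc n)
  then show ?case by (simp add: bessel_sum_Suc mult.commute)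
qed

text \<open>For natural j the terms of S(n,j) with n+1-i > j vanish, so S(n,j) is exactly a_{j,n+1},
  whose summation starts at max(n+1-j, 0).\<close>
lemma a_coef_eq_bessel_sum: "a_coef j (Suc n) = bessel_sum n (int j)"
proof -
  let ?f = "\<lambda>i. (- 1 / 2) ^ i * bessel_coeff n i * falling (int j) (Suc n - i)"
  let ?s = "nat (max (int (Suc n) - int j) 0)"
  have "bessel_sum n (int j) = (\<Sum>i\<in>{?s..n}. ?f i)"
    unfolding bessel_sum_def
  proof (rule sum.mono_neutral_right)
    show "\<forall>i\<in>{..n} - {?s..n}. ?f i = 0" by (auto intro!: falling_eq_0)
  qed auto
  also have "\<dots> = a_coef j (Suc n)"
    unfolding a_coef_def by (intro sum.cong refl) (auto simp: bessel_coeff_def)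
  finally show ?thesis by simp
qed

lemma odd_product:
  "(\<Prod>l\<le>n. real (2 * n + 1) - 2 * real l) = fact (2 * n + 1) / (2 ^ n * fact n)"
proof (induction n)
  case 0
  show ?case by simp
next
  case (Suc n)
  \<comment> \<open>the denominator (n+1) n! in the normal form produced by the simplifier\<close>
  have "(fact n :: real) + fact n * real n > 0" by (simp add: add_pos_nonneg)
  then have step: "(2 * real n + 3) * (fact (2 * n + 1) / (2 ^ n * fact n))
      = fact (2 * n + 1 + 2) / (2 ^ Suc n * fact (n + 1))"
    unfolding fact_plus_1 fact_plus_2 by (simp add: divide_simps) (simp add: algebra_simps)
  have "(\<Prod>l\<le>Suc n. real (2 * Suc n + 1) - 2 * real l)
      = (2 * real n + 3) * (\<Prod>l\<le>n. real (2 * n + 1) - 2 * real l)"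
    by (subst prod.atMost_Suc_shift) (simp add: algebra_simps)
  then show ?case unfolding Suc step by (simp add: eval_nat_numeral del: fact_Suc)
qed

text \<open>At an even j = 2t with t <= n the product contains the factor j - 2t = 0.\<close>
lemma even_product:
  assumes "even j" "j \<le> 2 * n"
  shows "(\<Prod>l\<le>n. real j - 2 * real l) = 0"
proof -
  obtain t where "j = 2 * t" using assms(1) by blast
  with assms(2) show ?thesis by (intro prod_zero) (auto intro!: bexI[where x = t])
qed

theorem mainTheorem11:
  fixes k :: nat
  assumes "k \<ge> 1"
  shows "a_coef (2 * k - 1) k = fact (2 * k - 1) / (2 ^ (k - 1) * fact (k - 1))
         \<and> a_coef (2 * k - 1) k \<noteq> 0
         \<and> (\<forall>j. even j \<and> 2 \<le> j \<and> j \<le> 2 * k - 2 \<longrightarrow> a_coef j k = 0)"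
proof -
  obtain n where k: "k = Suc n" using assms by (cases k) auto
  have a_coef_prod: "a_coef j k = (\<Prod>l\<le>n. real j - 2 * real l)" for j
    unfolding k a_coef_eq_bessel_sum bessel_sum_closed by simp
  have odd: "a_coef (2 * k - 1) k = fact (2 * k - 1) / (2 ^ (k - 1) * fact (k - 1))"
  proof -
    have "2 * k - 1 = 2 * n + 1" "k - 1 = n" using k by simp_all
    then show ?thesis by (simp only: a_coef_prod odd_product)
  qed
  moreover have "a_coef (2 * k - 1) k \<noteq> 0" unfolding odd by simp
  moreover have "a_coef j k = 0" if "even j" "j \<le> 2 * k - 2" for j
    unfolding a_coef_prod using that k by (intro even_product) auto
  ultimately show ?thesis by blast
qed

end
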